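(* $$\sum_{n=1}^\infty \frac{H_n \binom{2n}{n}}{(2n+1)\, 2^{2n}} = 4G - \pi\log 2,$$ where $G$ is Catalan's constant.
   Context: $H_n=\sum_{k=1}^n \frac{1}{k}$ denotes the $n$-th harmonic number and $\binom{2n}{n}$ the central binomial coefficient; $G=\sum_{n=0}^\infty \frac{(-1)^n}{(2n+1)^2}$ is Catalan's constant; $\log$ is the natural logarithm. *)

theory Defs
  imports "HOL-Analysis.Analysis"
begin

definition catalan_const :: real where
  "catalan_const = (\<Sum>n. (-1) ^ n / (2 * real n + 1) ^ 2)"

end

(*
  Write H_n as the integral over [0,1] of sum_{j<n} 2 s^(2j+1) = 2 s (1 - s^(2n)) / (1 - s^2).
  With c_n = binom(2n,n)/4^n, the series sum_n c_n s^(2n+1)/(2n+1) is arcsin s (integrate the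
  binomial series of 1/sqrt(1 - s^2)), and since its coefficients are nonnegative it sums to
  arcsin 1 = pi/2 at s = 1. Summing under the integral sign (monotone convergence) turns the
  left-hand side into the integral over [0,1] of (pi s - 2 arcsin s)/(1 - s^2). Substituting
  s = cos u, this integrand has the primitive -4 Ti2(tan(u/2)) - pi log((1 + s)/2), where
  Ti2(x) = sum_n (-1)^n x^(2n+1)/(2n+1)^2 is the inverse tangent integral, so that Ti2(1) = G.
*)
theory Submission
  imports Defs
begin

definition cbinom :: "nat \<Rightarrow> real" where
  "cbinom n = real ((2 * n) choose n) / 4 ^ n"

lemma cbinom_nonneg: "0 \<le> cbinom n"
  by (simp add: cbinom_def)

lemma cbinom_le_1: "cbinom n \<le> 1"
proof -
  have "(2 * n) choose n \<le> 4 ^ n"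
    using binomial_le_pow2[of "2 * n" n] by (simp add: power_mult)
  then show ?thesis
    unfolding cbinom_def by (simp add: divide_simps flip: of_nat_le_iff)
qed

lemma cbinom_eq_gchoose: "cbinom n = (-1) ^ n * ((-1/2 :: real) gchoose n)"
proof -
  have "fact (2 * n) = 4 ^ n * pochhammer (1/2) n * (fact n :: real)"
    using pochhammer_double[of "1/2 :: real" n] by (simp add: pochhammer_fact power_mult)
  moreover have "real ((2 * n) choose n) = fact (2 * n) / (fact n * fact n)"
    by (simp add: binomial_fact mult_2)
  ultimately show ?thesis
    unfolding cbinom_def gbinomial_pochhammer by (simp add: field_simps flip: power_mult_distrib)
qed

lemma cbinom_power_series:
  assumes "\<bar>x\<bar> < 1"
  shows "(\<lambda>n. cbinom n * x ^ (2 * n)) sums (1 / sqrt (1 - x^2))"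
proof -
  have "\<bar>-(x^2)\<bar> < 1"
    using assms by (simp add: abs_square_less_1)
  then have "(\<lambda>n. ((-1/2) gchoose n) * (-(x^2)) ^ n) sums (1 + -(x^2)) powr (-1/2)"
    by (rule gen_binomial_real)
  moreover have "((-1/2) gchoose n) * (-(x^2)) ^ n = cbinom n * x ^ (2 * n)" for n
    unfolding cbinom_eq_gchoose power_minus[of "x^2"] power_mult by (simp add: mult_ac)
  moreover have "(1 + -(x^2)) powr (-1/2) = 1 / sqrt (1 - x^2)"
    using assms by (simp add: powr_minus_divide powr_half_sqrt abs_square_less_1 less_imp_le)
  ultimately show ?thesis
    by simp
qed

lemma odd_power_series_deriv:
  fixes a :: "nat \<Rightarrow> real"
  assumes bounded: "\<And>n. \<bar>a n\<bar> \<le> B" and x: "\<bar>x\<bar> < 1"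
  shows "summable (\<lambda>n. a n / (2 * real n + 1) * x ^ (2 * n + 1))"
    and "((\<lambda>y. \<Sum>n. a n / (2 * real n + 1) * y ^ (2 * n + 1)) has_real_derivative
          (\<Sum>n. a n * x ^ (2 * n))) (at x)"
proof -
  define r where "r = (\<bar>x\<bar> + 1) / 2"
  have r: "\<bar>x\<bar> < r" "r < 1"
    using x by (auto simp: r_def)
  have deriv: "((\<lambda>y. a n / (2 * real n + 1) * y ^ (2 * n + 1)) has_field_derivative a n * y ^ (2 * n))
      (at y within {-r..r})" for n y
    using DERIV_cmult[OF DERIV_pow[of "2 * n + 1" y], of "a n / (2 * real n + 1)"]
    by (simp add: add.commute)
  have "uniformly_convergent_on {-r..r} (\<lambda>N y. \<Sum>n<N. a n * y ^ (2 * n))"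
  proof (rule Weierstrass_m_test'[where M = "\<lambda>n. B * (r^2) ^ n"])
    fix n y assume "y \<in> {-r..r}"
    then have "\<bar>y\<bar> ^ (2 * n) \<le> r ^ (2 * n)"
      by (intro power_mono) auto
    then show "norm (a n * y ^ (2 * n)) \<le> B * (r^2) ^ n"
      using bounded[of n] by (auto simp: abs_mult power_abs power_mult intro: mult_mono)
  next
    show "summable (\<lambda>n. B * (r^2) ^ n)"
      using r by (intro summable_mult summable_geometric) (simp add: abs_square_less_1)
  qed
  note series = has_field_derivative_series'[OF convex_real_interval(5) deriv this, of 0 x]
  show "summable (\<lambda>n. a n / (2 * real n + 1) * x ^ (2 * n + 1))"
    using series(1) r by (auto simp: abs_less_iff)
  show "((\<lambda>y. \<Sum>n. a n / (2 * real n + 1) * y ^ (2 * n + 1)) has_real_derivative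
          (\<Sum>n. a n * x ^ (2 * n))) (at x)"
    using series(2) r by (auto simp: abs_less_iff)
qed

lemma arcsin_series:
  assumes "\<bar>x\<bar> < 1"
  shows "(\<lambda>n. cbinom n / (2 * real n + 1) * x ^ (2 * n + 1)) sums arcsin x"
proof -
  define S where "S y = (\<Sum>n. cbinom n / (2 * real n + 1) * y ^ (2 * n + 1))" for y
  have cbinom_bounded: "\<bar>cbinom n\<bar> \<le> 1" for n
    using cbinom_nonneg cbinom_le_1 by simp
  have "((\<lambda>y. S y - arcsin y) has_field_derivative 0) (at y within {-1<..<1})"
    if "y \<in> {-1<..<1}" for y
  proof -
    have y: "\<bar>y\<bar> < 1"
      using that by auto
    have "(S has_real_derivative (\<Sum>n. cbinom n * y ^ (2 * n))) (at y)"
      unfolding S_def[abs_def] by (rule odd_power_series_deriv(2)[of cbinom 1, OF cbinom_bounded y])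
    also have "(\<Sum>n. cbinom n * y ^ (2 * n)) = 1 / sqrt (1 - y^2)"
      using cbinom_power_series[OF y] by (rule sums_unique[symmetric])
    finally have "(S has_real_derivative 1 / sqrt (1 - y^2)) (at y)" .
    moreover have "(arcsin has_real_derivative 1 / sqrt (1 - y^2)) (at y)"
      using that by (auto intro!: DERIV_arcsin simp: divide_inverse)
    ultimately have "((\<lambda>y. S y - arcsin y) has_real_derivative 0) (at y)"
      using DERIV_diff by fastforce
    then show ?thesis
      by (rule has_field_derivative_at_within)
  qed
  then have "\<exists>c. \<forall>y\<in>{-1<..<1}. S y - arcsin y = c"
    by (rule has_field_derivative_zero_constant[OF convex_real_interval(8)])
  then obtain c where c: "\<And>y. y \<in> {-1<..<1} \<Longrightarrow> S y - arcsin y = c"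
    by blast
  have "S x - arcsin x = S 0 - arcsin 0"
    using c[of x] c[of 0] assms by (simp add: abs_less_iff)
  then have "S x = arcsin x"
    by (simp add: S_def)
  with odd_power_series_deriv(1)[of cbinom 1, OF cbinom_bounded assms] show ?thesis
    by (simp add: S_def sums_iff)
qed

lemma nonneg_power_series_sums_limit_at_left_1:
  fixes a :: "nat \<Rightarrow> real" and e :: "nat \<Rightarrow> nat"
  assumes nonneg: "\<And>n. 0 \<le> a n"
    and series: "\<And>x. 0 < x \<Longrightarrow> x < 1 \<Longrightarrow> (\<lambda>n. a n * x ^ e n) sums f x"
    and limit: "(f \<longlongrightarrow> L) (at_left 1)"
  shows "a sums L"
proof -
  have near_1: "eventually (\<lambda>x. x \<in> {0<..<1}) (at_left (1::real))"
    by (rule eventually_at_left_real) simp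
  have partial_le: "(\<Sum>n<N. a n) \<le> L" for N
  proof (rule tendsto_le[OF trivial_limit_at_left_real limit])
    have "((\<lambda>x. \<Sum>n<N. a n * x ^ e n) \<longlongrightarrow> (\<Sum>n<N. a n * 1 ^ e n)) (at_left 1)"
      by (intro tendsto_intros)
    then show "((\<lambda>x. \<Sum>n<N. a n * x ^ e n) \<longlongrightarrow> (\<Sum>n<N. a n)) (at_left 1)"
      by simp
    show "eventually (\<lambda>x. (\<Sum>n<N. a n * x ^ e n) \<le> f x) (at_left 1)"
      using near_1
    proof eventually_elim
      case (elim x)
      then have "(\<Sum>n<N. a n * x ^ e n) \<le> (\<Sum>n. a n * x ^ e n)"
        using series[of x] nonneg by (intro sum_le_suminf) (auto simp: sums_iff)
      also have "\<dots> = f x"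
        using series[of x] elim by (simp add: sums_iff)
      finally show ?case .
    qed
  qed
  have summable: "summable a"
    using nonneg partial_le by (rule summableI_nonneg_bounded)
  have "L \<le> suminf a"
  proof (rule tendsto_le[OF trivial_limit_at_left_real tendsto_const limit])
    show "eventually (\<lambda>x. f x \<le> suminf a) (at_left 1)"
      using near_1
    proof eventually_elim
      case (elim x)
      then have "a n * x ^ e n \<le> a n" for n
        using nonneg[of n] by (intro mult_left_le power_le_one) auto
      moreover have "(\<lambda>n. a n * x ^ e n) sums f x"
        using series elim by simp
      ultimately show ?case
        using summable_sums[OF summable] by (rule sums_le)
    qed
  qed
  moreover have "suminf a \<le> L"
    using summable partial_le by (rule suminf_le_const)
  ultimately show ?thesis
    using summable by (simp add: sums_iff)
qed

lemma arcsin_series_at_1: "(\<lambda>n. cbinom n / (2 * real n + 1)) sums (pi / 2)"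
proof (rule nonneg_power_series_sums_limit_at_left_1)
  show "0 \<le> cbinom n / (2 * real n + 1)" for n
    using cbinom_nonneg by simp
  show "(\<lambda>n. cbinom n / (2 * real n + 1) * x ^ (2 * n + 1)) sums arcsin x" if "0 < x" "x < 1" for x
    using that by (intro arcsin_series) auto
  have "(arcsin \<longlongrightarrow> arcsin 1) (at_left 1)"
    using continuous_on_arcsin' by (rule continuous_on_Icc_at_leftD) simp
  then show "(arcsin \<longlongrightarrow> pi / 2) (at_left 1)"
    by simp
qed

definition Ti2 :: "real \<Rightarrow> real" where
  "Ti2 x = (\<Sum>n. (-1) ^ n / (2 * real n + 1)^2 * x ^ (2 * n + 1))"

lemma Ti2_has_real_derivative:
  assumes "\<bar>x\<bar> < 1" "x \<noteq> 0"
  shows "(Ti2 has_real_derivative arctan x / x) (at x)"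
proof -
  have bounded: "\<bar>(-1) ^ n / (2 * real n + 1)\<bar> \<le> 1" for n
    by (simp add: divide_simps)
  have Ti2_eq: "Ti2 = (\<lambda>y. \<Sum>n. (-1) ^ n / (2 * real n + 1) / (2 * real n + 1) * y ^ (2 * n + 1))"
    unfolding Ti2_def by (intro ext suminf_cong) (simp add: power2_eq_square)
  have "(Ti2 has_real_derivative (\<Sum>n. (-1) ^ n / (2 * real n + 1) * x ^ (2 * n))) (at x)"
    unfolding Ti2_eq
    by (rule odd_power_series_deriv(2)[of "\<lambda>n. (-1) ^ n / (2 * real n + 1)", OF bounded assms(1)])
  moreover have "(\<lambda>n. (-1) ^ n / (2 * real n + 1) * x ^ (2 * n)) sums (arctan x / x)"
  proof (rule sums_mult_D)
    have "(\<lambda>k. (-1) ^ k * (1 / real (k * 2 + 1) * x ^ (k * 2 + 1))) sums arctan x"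
      using assms summable_arctan_series[of x] arctan_series[of x] by (simp add: sums_iff)
    then show "(\<lambda>n. x * ((-1) ^ n / (2 * real n + 1) * x ^ (2 * n))) sums (arctan x)"
      by (simp add: mult_ac add.commute)
  qed fact
  ultimately show ?thesis
    by (simp add: sums_iff)
qed

lemma continuous_on_Ti2: "continuous_on {-1..1} Ti2"
proof -
  have "summable (\<lambda>n. inverse (real n ^ 2))"
    by (rule inverse_power_summable) simp
  then have "summable (\<lambda>n. inverse (real (Suc n) ^ 2))"
    by (subst summable_Suc_iff)
  then have limit: "uniform_limit {-1..1} (\<lambda>N y. \<Sum>n<N. (-1) ^ n / (2 * real n + 1)^2 * y ^ (2 * n + 1)) Ti2
      sequentially"
    unfolding Ti2_def[abs_def]
  proof (rule Weierstrass_m_test[rotated])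
    fix n and y :: real
    assume "y \<in> {-1..1}"
    have "norm ((-1) ^ n / (2 * real n + 1)^2 * y ^ (2 * n + 1)) = \<bar>y\<bar> ^ (2 * n + 1) / (2 * real n + 1)^2"
      by (simp add: abs_mult power_abs)
    also have "\<dots> \<le> 1 / (2 * real n + 1)^2"
      using \<open>y \<in> {-1..1}\<close> by (intro divide_right_mono power_le_one) auto
    also have "\<dots> \<le> inverse (real (Suc n) ^ 2)"
      by (simp add: divide_simps power_mono)
    finally show "norm ((-1) ^ n / (2 * real n + 1)^2 * y ^ (2 * n + 1)) \<le> inverse (real (Suc n) ^ 2)" .
  qed
  show ?thesis
    by (intro uniform_limit_theorem[OF _ limit]) (auto intro!: always_eventually continuous_intros)
qed

lemma Ti2_0 [simp]: "Ti2 0 = 0"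
  by (simp add: Ti2_def)

lemma Ti2_1: "Ti2 1 = catalan_const"
  by (simp add: Ti2_def catalan_const_def)

definition half_angle_tan :: "real \<Rightarrow> real" where
  "half_angle_tan s = sqrt (1 - s^2) / (1 + s)"

lemma half_angle_tan_bounds:
  assumes "0 \<le> s" "s \<le> 1"
  shows "0 \<le> half_angle_tan s" "half_angle_tan s \<le> 1"
proof -
  have "1 - s^2 \<le> (1 + s)^2"
    using assms by (simp add: power2_eq_square algebra_simps)
  then have "sqrt (1 - s^2) \<le> 1 + s"
    using assms real_sqrt_le_mono by fastforce
  moreover have "0 \<le> sqrt (1 - s^2)"
    using assms by (simp add: power_le_one)
  ultimately show "0 \<le> half_angle_tan s" "half_angle_tan s \<le> 1"
    using assms by (simp_all add: half_angle_tan_def)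
qed

lemma half_angle_tan_strict_bounds:
  assumes "0 < s" "s < 1"
  shows "0 < half_angle_tan s" "half_angle_tan s < 1"
proof -
  have "1 - s^2 < (1 + s)^2"
    using assms by (auto simp: power2_eq_square algebra_simps intro!: add_pos_pos)
  then have "sqrt (1 - s^2) < 1 + s"
    using assms real_sqrt_less_mono by fastforce
  moreover have "0 < sqrt (1 - s^2)"
    using assms by (simp add: abs_square_less_1)
  ultimately show "0 < half_angle_tan s" "half_angle_tan s < 1"
    using assms by (simp_all add: half_angle_tan_def)
qed

lemma arctan_half_angle_tan:
  assumes "\<bar>s\<bar> < 1"
  shows "arctan (half_angle_tan s) = arccos s / 2"
proof -
  have "tan (arccos s / 2) = sin (arccos s) / (cos (arccos s) + 1)"
    using tan_half[of "arccos s / 2"] by simp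
  also have "\<dots> = half_angle_tan s"
    using assms by (simp add: half_angle_tan_def sin_arccos abs_le_iff add.commute)
  finally have "arctan (half_angle_tan s) = arctan (tan (arccos s / 2))"
    by simp
  also have "\<dots> = arccos s / 2"
    using arccos_lt_bounded[of s] assms by (intro arctan_tan) (auto simp: abs_less_iff)
  finally show ?thesis .
qed

lemma half_angle_tan_has_real_derivative:
  assumes "\<bar>s\<bar> < 1"
  shows "(half_angle_tan has_real_derivative -1 / (sqrt (1 - s^2) * (1 + s))) (at s)"
proof -
  define q where "q = sqrt (1 - s^2)"
  have "0 < 1 - s^2"
    using assms by (simp add: abs_square_less_1)
  then have q: "0 < q" "q^2 = 1 - s^2"
    by (simp_all add: q_def)
  have "1 + s \<noteq> 0"
    using assms by auto
  have deriv: "(half_angle_tan has_real_derivative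
      ((inverse q / 2 * (- (2 * s))) * (1 + s) - q * 1) / ((1 + s) * (1 + s))) (at s)"
    unfolding half_angle_tan_def[abs_def] q_def using \<open>0 < 1 - s^2\<close> assms
    by (auto intro!: derivative_eq_intros simp: power2_eq_square)
  have "((inverse q / 2 * (- (2 * s))) * (1 + s) - q * 1) / ((1 + s) * (1 + s))
      = - (s * (1 + s) + q^2) / (q * ((1 + s) * (1 + s)))"
    using q \<open>1 + s \<noteq> 0\<close> by (simp add: field_simps power2_eq_square)
  also have "\<dots> = - (1 + s) / (q * ((1 + s) * (1 + s)))"
    unfolding q(2) by (simp add: algebra_simps power2_eq_square)
  also have "\<dots> = -1 / (q * (1 + s))"
    using q \<open>1 + s \<noteq> 0\<close> by (simp add: divide_simps)
  finally show ?thesis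
    using deriv by (simp add: q_def)
qed

definition catalan_integrand :: "real \<Rightarrow> real" where
  "catalan_integrand s = (pi * s - 2 * arcsin s) / (1 - s^2)"

definition catalan_primitive :: "real \<Rightarrow> real" where
  "catalan_primitive s = -4 * Ti2 (half_angle_tan s) - pi * ln ((1 + s) / 2)"

lemma catalan_integrand_arccos:
  assumes "\<bar>s\<bar> < 1"
  shows "catalan_integrand s = 2 * arccos s / (1 - s^2) - pi / (1 + s)"
proof -
  have "1 - s^2 = (1 - s) * (1 + s)"
    by (simp add: power2_eq_square algebra_simps)
  then have "pi / (1 + s) = pi * (1 - s) / (1 - s^2)"
    using assms by simp
  moreover have numerator: "2 * arccos s - pi * (1 - s) = pi * s - 2 * arcsin s"
    using arccos_arcsin_eq[of s] assms by (simp add: algebra_simps)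
  ultimately show ?thesis
    by (simp add: catalan_integrand_def diff_divide_distrib flip: numerator)
qed

lemma catalan_primitive_has_real_derivative:
  assumes "0 < s" "s < 1"
  shows "(catalan_primitive has_real_derivative catalan_integrand s) (at s)"
proof -
  define t where "t = half_angle_tan s"
  define q where "q = sqrt (1 - s^2)"
  have s: "\<bar>s\<bar> < 1" "0 < 1 + s"
    using assms by auto
  have t: "\<bar>t\<bar> < 1" "t \<noteq> 0"
    using half_angle_tan_strict_bounds[OF assms] by (auto simp: t_def)
  have q: "0 < q" "q^2 = 1 - s^2"
    using s by (simp_all add: q_def abs_square_less_1 less_imp_le)
  have "((\<lambda>s. Ti2 (half_angle_tan s)) has_real_derivative arctan t / t * (-1 / (q * (1 + s)))) (at s)"
    unfolding t_def q_def
    by (rule DERIV_chain2[OF Ti2_has_real_derivative half_angle_tan_has_real_derivative])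
      (use t s in \<open>simp_all add: t_def\<close>)
  moreover have "((\<lambda>s. ln ((1 + s) / 2)) has_real_derivative 1 / (1 + s)) (at s)"
    using assms by (auto intro!: derivative_eq_intros simp: field_simps)
  ultimately have "(catalan_primitive has_real_derivative
      -4 * (arctan t / t * (-1 / (q * (1 + s)))) - pi * (1 / (1 + s))) (at s)"
    unfolding catalan_primitive_def[abs_def] by (intro DERIV_diff DERIV_cmult)
  moreover have "-4 * (arctan t / t * (-1 / (q * (1 + s)))) = 2 * arccos s / q^2"
  proof -
    have arctan_t: "arctan t = arccos s / 2" and t_eq: "t = q / (1 + s)"
      using arctan_half_angle_tan[OF s(1)] by (simp_all add: t_def q_def half_angle_tan_def)
    show ?thesis
      unfolding arctan_t unfolding t_eq using q(1) s(2) by (simp add: divide_simps power2_eq_square)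
  qed
  ultimately show ?thesis
    using catalan_integrand_arccos[OF s(1)] by (simp add: q(2))
qed

lemma continuous_on_catalan_primitive: "continuous_on {0..1} catalan_primitive"
proof -
  have "continuous_on {0..1} half_angle_tan"
    unfolding half_angle_tan_def by (intro continuous_intros) auto
  then have "continuous_on {0..1} (\<lambda>s. Ti2 (half_angle_tan s))"
    by (rule continuous_on_compose2[OF continuous_on_Ti2]) (use half_angle_tan_bounds in force)
  then show ?thesis
    unfolding catalan_primitive_def by (intro continuous_intros) auto
qed

lemma catalan_integrand_has_integral:
  "(catalan_integrand has_integral (4 * catalan_const - pi * ln 2)) {0..1}"
proof -
  have "(catalan_integrand has_integral (catalan_primitive 1 - catalan_primitive 0)) {0..1}"
    by (intro fundamental_theorem_of_calculus_interior continuous_on_catalan_primitive)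
      (auto simp flip: has_real_derivative_iff_has_vector_derivative
        intro: catalan_primitive_has_real_derivative)
  moreover have "catalan_primitive 1 = 0" "catalan_primitive 0 = pi * ln 2 - 4 * catalan_const"
    by (simp_all add: catalan_primitive_def half_angle_tan_def Ti2_1 ln_div)
  ultimately show ?thesis
    by simp
qed

lemma odd_geometric_sum:
  fixes x :: "'a :: comm_ring_1"
  shows "(1 - x^2) * (\<Sum>j<n. x ^ (2 * j + 1)) = x * (1 - x ^ (2 * n))"
proof (induction n)
  case (Suc n)
  have "(1 - x^2) * (\<Sum>j<Suc n. x ^ (2 * j + 1)) = x * (1 - x ^ (2 * n)) + (1 - x^2) * x ^ (2 * n + 1)"
    by (simp only: sum.lessThan_Suc distrib_left Suc.IH)
  also have "\<dots> = x * (1 - x ^ (2 * Suc n))"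
    by (simp add: algebra_simps power2_eq_square)
  finally show ?case .
qed simp

lemma has_integral_power_0_1: "((\<lambda>x::real. x ^ k) has_integral 1 / (k + 1)) {0..1}"
proof -
  have "((\<lambda>x. x ^ (k + 1) / (k + 1)) has_real_derivative x ^ k) (at x within {0..1})" for x :: real
    using DERIV_cdivide[OF DERIV_pow[of "k + 1" x], of "k + 1"] by (simp add: has_field_derivative_at_within)
  then have "((\<lambda>x::real. x ^ k) has_integral (1 ^ (k + 1) / (k + 1) - 0 ^ (k + 1) / (k + 1))) {0..1}"
    by (intro fundamental_theorem_of_calculus) (simp_all add: has_real_derivative_iff_has_vector_derivative)
  then show ?thesis
    by (simp add: add.commute)
qed

lemma harm_has_integral: "((\<lambda>s::real. \<Sum>j<n. 2 * s ^ (2 * j + 1)) has_integral harm n) {0..1}"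
proof -
  have "((\<lambda>s. \<Sum>j<n. 2 * s ^ (2 * j + 1)) has_integral (\<Sum>j<n. 2 * (1 / (real (2 * j + 1) + 1)))) {0..1}"
    by (intro has_integral_sum has_integral_mult_right has_integral_power_0_1) auto
  also have "(\<Sum>j<n. 2 * (1 / (real (2 * j + 1) + 1))) = harm n"
    unfolding harm_altdef by (rule sum.cong) (simp_all add: field_simps)
  finally show ?thesis .
qed

lemma sums_integrals_of_nonneg_series:
  fixes f :: "nat \<Rightarrow> 'a::euclidean_space \<Rightarrow> real"
  assumes integral: "\<And>n. (f n has_integral I n) S"
    and nonneg: "\<And>n x. x \<in> S \<Longrightarrow> 0 \<le> f n x"
    and sums: "\<And>x. x \<in> S \<Longrightarrow> (\<lambda>n. f n x) sums g x"
    and g: "(g has_integral J) S"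
  shows "I sums J"
proof -
  have partial: "((\<lambda>x. \<Sum>n<N. f n x) has_integral (\<Sum>n<N. I n)) S" for N
    using integral by (intro has_integral_sum) auto
  have "0 \<le> I n" for n
    using integral nonneg by (rule has_integral_nonneg)
  moreover have "(\<Sum>n<N. I n) \<le> J" for N
    using partial g
  proof (rule has_integral_le)
    fix x assume "x \<in> S"
    then have "(\<Sum>n<N. f n x) \<le> (\<Sum>n. f n x)"
      using sums nonneg by (intro sum_le_suminf) (auto simp: sums_iff)
    also have "\<dots> = g x"
      using sums \<open>x \<in> S\<close> by (simp add: sums_iff)
    finally show "(\<Sum>n<N. f n x) \<le> g x" .
  qed
  ultimately have summable: "summable I"
    by (rule summableI_nonneg_bounded)
  have "(g has_integral suminf I) S"
  proof (rule has_integral_monotone_convergence_increasing[OF partial])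
    show "(\<Sum>n<k. f n x) \<le> (\<Sum>n<Suc k. f n x)" if "x \<in> S" for k x
      using nonneg[OF that] by simp
    show "(\<lambda>k. \<Sum>n<k. f n x) \<longlonglongrightarrow> g x" if "x \<in> S" for x
      using sums[OF that] by (simp add: sums_def)
    show "(\<lambda>k. \<Sum>n<k. I n) \<longlonglongrightarrow> suminf I"
      using summable by (rule summable_LIMSEQ)
  qed
  then have "suminf I = J"
    using g by (rule has_integral_unique)
  with summable show ?thesis
    by (simp add: sums_iff)
qed

lemma catalan_integrand_sums:
  assumes "0 < s" "s < 1"
  shows "(\<lambda>n. cbinom n / (2 * real n + 1) * (\<Sum>j<n. 2 * s ^ (2 * j + 1))) sums catalan_integrand s"
proof -
  define c where "c n = cbinom n / (2 * real n + 1)" for n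
  have "1 - s^2 \<noteq> 0"
    using assms by (simp add: abs_square_eq_1)
  have "(\<lambda>n. 2 / (1 - s^2) * (s * c n - c n * s ^ (2 * n + 1))) sums
      (2 / (1 - s^2) * (s * (pi / 2) - arcsin s))"
    unfolding c_def using assms
    by (intro sums_mult sums_diff arcsin_series_at_1 arcsin_series) auto
  moreover have "2 / (1 - s^2) * (s * c n - c n * s ^ (2 * n + 1)) = c n * (\<Sum>j<n. 2 * s ^ (2 * j + 1))"
    for n
  proof -
    have geometric: "(\<Sum>j<n. s ^ (2 * j + 1)) = s * (1 - s ^ (2 * n)) / (1 - s^2)"
      unfolding nonzero_eq_divide_eq[OF \<open>1 - s^2 \<noteq> 0\<close>]
      using odd_geometric_sum[of s n] by (metis mult.commute)
    show ?thesis
      unfolding sum_distrib_left[symmetric] geometric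
      using \<open>1 - s^2 \<noteq> 0\<close> by (simp add: field_simps)
  qed
  moreover have "2 / (1 - s^2) * (s * (pi / 2) - arcsin s) = catalan_integrand s"
    using \<open>1 - s^2 \<noteq> 0\<close> by (simp add: catalan_integrand_def field_simps)
  ultimately show ?thesis
    by (simp add: c_def)
qed

lemma has_integral_Ioo_iff_Icc:
  fixes f :: "real \<Rightarrow> 'a::banach"
  shows "(f has_integral y) {a<..<b} \<longleftrightarrow> (f has_integral y) {a..b}"
  using has_integral_open_interval[of f y a b] by (simp add: box_real)

(* The series of integrands diverges at s = 1, hence the open interval. *)
lemma cbinom_harm_series_sums:
  "(\<lambda>n. cbinom n / (2 * real n + 1) * harm n) sums (4 * catalan_const - pi * ln 2)"
proof (rule sums_integrals_of_nonneg_series)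
  show "((\<lambda>s. cbinom n / (2 * real n + 1) * (\<Sum>j<n. 2 * s ^ (2 * j + 1))) has_integral
      cbinom n / (2 * real n + 1) * harm n) {0<..<1}" for n
    unfolding has_integral_Ioo_iff_Icc by (rule has_integral_mult_right[OF harm_has_integral])
  show "0 \<le> cbinom n / (2 * real n + 1) * (\<Sum>j<n. 2 * s ^ (2 * j + 1))" if "s \<in> {0<..<1}" for n s
    using that cbinom_nonneg[of n] by (intro mult_nonneg_nonneg divide_nonneg_nonneg sum_nonneg) auto
  show "(\<lambda>n. cbinom n / (2 * real n + 1) * (\<Sum>j<n. 2 * s ^ (2 * j + 1))) sums catalan_integrand s"
    if "s \<in> {0<..<1}" for s
    using that by (intro catalan_integrand_sums) auto
  show "(catalan_integrand has_integral (4 * catalan_const - pi * ln 2)) {0<..<1}"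
    unfolding has_integral_Ioo_iff_Icc by (rule catalan_integrand_has_integral)
qed

theorem mainTheorem6:
  shows "(\<lambda>m. let n = Suc m in
            harm n * real ((2 * n) choose n) / ((2 * real n + 1) * 2 ^ (2 * n)))
         sums (4 * catalan_const - pi * ln 2)"
proof -
  define a where "a n = cbinom n / (2 * real n + 1) * harm n" for n
  have "a sums (4 * catalan_const - pi * ln 2)"
    unfolding a_def by (rule cbinom_harm_series_sums)
  moreover have "a 0 = 0"
    by (simp add: a_def harm_def)
  ultimately have "(\<lambda>m. a (Suc m)) sums (4 * catalan_const - pi * ln 2)"
    by (simp add: sums_Suc_iff)
  moreover have "a n = harm n * real ((2 * n) choose n) / ((2 * real n + 1) * 2 ^ (2 * n))" for n
  proof -
    have "(2::real) ^ (2 * n) = 4 ^ n"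
      by (simp add: power_mult)
    then show ?thesis
      by (simp add: a_def cbinom_def mult_ac)
  qed
  ultimately show ?thesis
    by (simp add: Let_def)
qed

end
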